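(* Let $n_r,n_q\ge 1$ and $N\ge 1$ be integers, let $M_r\in\mathbb{R}^{n_r\times n_r}$ and $M_q\in\mathbb{R}^{n_q\times n_q}$ be symmetric positive definite, let $G_r\in\mathbb{R}^{n_q\times n_r}$ be arbitrary (possibly singular), and let $\gamma_r\in\mathbb{R}^{n_r\times n_r}$, $\gamma_q\in\mathbb{R}^{n_q\times n_q}$ be stiffness coefficients (in particular, positive scalars). Let $r^{\mathrm{in}},s^{\mathrm{in}}\in\mathbb{R}^{n_r}$ and $q^{\mathrm{in}}_1,\dots,q^{\mathrm{in}}_N\in\mathbb{R}^{n_q}$. Suppose $(r(t),Q_1(t),\dots,Q_N(t))$ solves the ODE system $$\Big(M_r+\sum_{i=1}^N G_r^T M_q G_r\Big)\ddot r=-\gamma_r r+\sum_{i=1}^N G_r^T\gamma_q Q_i,\qquad \dot Q_j=-G_r\dot r\quad(j=1,\dots,N),$$ with $r(0)=r^{\mathrm{in}}$, $\dot r(0)=s^{\mathrm{in}}$, $Q_j(0)=q^{\mathrm{in}}_j$. Define $\mu^t:=\frac1N\sum_{j=1}^N\delta_{Q_j(t)}$. Then $(r(t),\mu^t)$ is a solution of the linear partially kinetic system (defined in the context) with $N_{\mathrm{real}}:=N$, initial conditions $r(0)=r^{\mathrm{in}}$, $\dot r(0)=s^{\mathrm{in}}$, and initial measure $\mu^{\mathrm{in}}=\frac1N\sum_{j=1}^N\delta_{q^{\mathrm{in}}_j}$.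
   Context: $\delta_x$ denotes the Dirac measure at $x$. $\mathcal P^1(\mathbb{R}^{n_q})$ is the set of Borel probability measures on $\mathbb{R}^{n_q}$ with finite first moment. For a measurable map $\varphi:\mathbb{R}^{n_q}\to\mathbb{R}^{n_q}$ and a measure $\mu$, the pushforward is $\varphi\#\mu(A):=\mu(\varphi^{-1}(A))$ for Borel sets $A$. Linear partially kinetic system: with $n_r,n_q,M_r,M_q,G_r,\gamma_r,\gamma_q$ as in the claim, a constant $N_{\mathrm{real}}>0$, initial data $r^{\mathrm{in}},s^{\mathrm{in}}\in\mathbb{R}^{n_r}$ and $\mu^{\mathrm{in}}\in\mathcal P^1(\mathbb{R}^{n_q})$, a solution consists of a twice differentiable $r:[0,\infty)\to\mathbb{R}^{n_r}$, a characteristic flow $Q:[0,\infty)\times\mathbb{R}^{n_q}\to\mathbb{R}^{n_q}$ differentiable in $t$, and measures $\mu^t$ such that $$\Big(M_r+N_{\mathrm{real}}\int_{\mathbb{R}^{n_q}}G_r^TM_qG_r\,d\mu^t(q)\Big)\ddot r(t)=-\gamma_r r(t)+N_{\mathrm{real}}G_r^T\gamma_q\int_{\mathbb{R}^{n_q}}q\,d\mu^t(q),$$ $$\partial_t Q(t,q^{\mathrm{in}})=-G_r\dot r(t),\quad Q(0,q^{\mathrm{in}})=q^{\mathrm{in}}\ \text{for all }q^{\mathrm{in}}\in\mathbb{R}^{n_q},\qquad \mu^t=Q(t,\cdot)\#\mu^{\mathrm{in}},$$ with $r(0)=r^{\mathrm{in}}$, $\dot r(0)=s^{\mathrm{in}}$.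 *)

theory Defs
  imports "HOL-Probability.Probability"
begin

definition sym_pos_def :: "real^'n^'n \<Rightarrow> bool" where
  "sym_pos_def M \<longleftrightarrow> transpose M = M \<and> (\<forall>x. x \<noteq> 0 \<longrightarrow> x \<bullet> (M *v x) > 0)"

definition P1 :: "('a::euclidean_space) measure \<Rightarrow> bool" where
  "P1 \<mu> \<longleftrightarrow> prob_space \<mu> \<and> sets \<mu> = sets borel \<and> integrable \<mu> (\<lambda>q. norm q)"

text \<open>Empirical measure (1/N) sum_{j<N} delta_{q j}, realised as the pushforward of the
  uniform probability measure on the index set {..<N} under j |-> q j.\<close>
definition empirical :: "nat \<Rightarrow> (nat \<Rightarrow> 'a::euclidean_space) \<Rightarrow> 'a measure" where
  "empirical N q = distr (uniform_count_measure {..<N}) borel q"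

definition lpk_solution ::
  "real^'r^'r \<Rightarrow> real^'q^'q \<Rightarrow> real^'r^'q \<Rightarrow> real^'r^'r \<Rightarrow> real^'q^'q \<Rightarrow> real
   \<Rightarrow> real^'r \<Rightarrow> real^'r \<Rightarrow> (real^'q) measure
   \<Rightarrow> (real \<Rightarrow> real^'r) \<Rightarrow> (real \<Rightarrow> (real^'q) measure) \<Rightarrow> bool" where
  "lpk_solution Mr Mq Gr gr gq Nreal r_in s_in \<mu>in r \<mu> \<longleftrightarrow>
     P1 \<mu>in \<and>
     (\<exists>r' r'' Q.
        (\<forall>t\<ge>0. (r has_vector_derivative r' t) (at t within {0..})
               \<and> (r' has_vector_derivative r'' t) (at t within {0..})) \<and>
        r 0 = r_in \<and> r' 0 = s_in \<and>
        (\<forall>t\<ge>0. (Mr + Nreal *\<^sub>R integral\<^sup>L (\<mu> t) (\<lambda>q. transpose Gr ** Mq ** Gr)) *v r'' t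
                 = - (gr *v r t) + Nreal *\<^sub>R (transpose Gr *v (gq *v integral\<^sup>L (\<mu> t) (\<lambda>q. q)))) \<and>
        (\<forall>qin. \<forall>t\<ge>0. ((\<lambda>s. Q s qin) has_vector_derivative - (Gr *v r' t)) (at t within {0..})) \<and>
        (\<forall>qin. Q 0 qin = qin) \<and>
        (\<forall>t\<ge>0. Q t \<in> borel_measurable borel \<and> \<mu> t = distr \<mu>in borel (Q t)))"

end

theory Submission
  imports Defs
begin

text \<open>Every particle moves by the same displacement \<open>-G\<^sub>r (r(t) - r(0))\<close>, because its velocity
  \<open>-G\<^sub>r \<dot>r\<close> does not depend on the particle. Hence the affine flow \<open>q \<mapsto> q - G\<^sub>r (r(t) - r(0))\<close>
  transports the initial empirical measure to the empirical measure at time \<open>t\<close>, and the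
  moments of an empirical measure turn the \<open>N\<close>-fold sums of the particle system into the
  integrals of the kinetic equation.\<close>

lemma measurable_uniform_count_measure_iff:
  "f \<in> measurable (uniform_count_measure A) M \<longleftrightarrow> f \<in> space (uniform_count_measure A) \<rightarrow> space M"
  by (metis measurable_cong_sets measurable_count_space_eq1 sets_uniform_count_measure_count_space
      space_count_space space_uniform_count_measure)

lemma prob_space_empirical: "N \<ge> 1 \<Longrightarrow> prob_space (empirical N q)"
  unfolding empirical_def
  by (intro prob_space.prob_space_distr prob_space_uniform_count_measure)
     (auto simp: measurable_uniform_count_measure_iff lessThan_empty_iff)

lemma integral_empirical:
  fixes f :: "'a::euclidean_space \<Rightarrow> 'b::euclidean_space"
  assumes "f \<in> borel_measurable borel"
  shows "integral\<^sup>L (empirical N q) f = (\<Sum>j<N. (1 / real N) *\<^sub>R f (q j))"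
  unfolding empirical_def using assms
  by (subst integral_distr)
     (auto simp: measurable_uniform_count_measure_iff uniform_count_measure_def
       lebesgue_integral_point_measure_finite)

lemma integrable_empirical_norm: "N \<ge> 1 \<Longrightarrow> integrable (empirical N q) norm"
proof -
  assume "N \<ge> 1"
  then interpret prob_space "uniform_count_measure {..<N}"
    by (intro prob_space_uniform_count_measure) (auto simp: lessThan_empty_iff)
  have "integrable (uniform_count_measure {..<N}) (\<lambda>j. norm (q j))"
    by (rule integrable_const_bound[where B = "\<Sum>j<N. norm (q j)"])
       (auto simp: space_uniform_count_measure measurable_uniform_count_measure_iff
         intro!: AE_I2 member_le_sum)
  then show ?thesis
    unfolding empirical_def
    by (subst integrable_distr_eq) (auto simp: measurable_uniform_count_measure_iff)
qed

lemma P1_empirical: "N \<ge> 1 \<Longrightarrow> P1 (empirical N q)"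
  unfolding P1_def using prob_space_empirical integrable_empirical_norm
  by (auto simp: empirical_def)

lemma sum_const_eq_mass_times_integral_empirical:
  "N \<ge> 1 \<Longrightarrow> (\<Sum>i<N. c) = real N *\<^sub>R integral\<^sup>L (empirical N q) (\<lambda>_. c :: 'b::euclidean_space)"
  by (simp add: prob_space.prob_space[OF prob_space_empirical] sum_constant_scaleR)

lemma sum_linear_eq_mass_times_mean_empirical:
  assumes "N \<ge> 1" and "linear L"
  shows "(\<Sum>j<N. L (q j)) = real N *\<^sub>R L (integral\<^sup>L (empirical N q) (\<lambda>x. x))"
  using assms by (simp add: integral_empirical linear_sum linear_scale scaleR_sum_right)

lemma distr_empirical:
  assumes "f \<in> borel_measurable borel" and "\<And>j. j < N \<Longrightarrow> p j = f (q j)"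
  shows "distr (empirical N q) borel f = empirical N p"
  unfolding empirical_def using assms
  by (subst distr_distr)
     (auto simp: measurable_uniform_count_measure_iff space_uniform_count_measure intro!: distr_cong)

lemma has_vector_derivative_neg_linear_image_imp_eq:
  fixes Q :: "real \<Rightarrow> 'a::real_normed_vector" and r :: "real \<Rightarrow> 'b::real_normed_vector"
  assumes L: "bounded_linear L"
    and r: "\<And>t. t \<ge> 0 \<Longrightarrow> (r has_vector_derivative r' t) (at t within {0..})"
    and Q: "\<And>t. t \<ge> 0 \<Longrightarrow> (Q has_vector_derivative - L (r' t)) (at t within {0..})"
    and "t \<ge> 0"
  shows "Q t = Q 0 - L (r t - r 0)"
proof -
  have "((\<lambda>s. Q s + L (r s)) has_vector_derivative 0) (at s within {0..})" if "s \<in> {0..}" for s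
    using has_vector_derivative_add[OF Q bounded_linear.has_vector_derivative[OF L r]] that
    by simp
  then obtain c where "\<And>s. s \<in> {0::real..} \<Longrightarrow> Q s + L (r s) = c"
    using has_vector_derivative_zero_constant[OF convex_real_interval(1)] by blast
  then have "Q t + L (r t) = Q 0 + L (r 0)"
    using \<open>t \<ge> 0\<close> by simp
  then show ?thesis
    by (simp add: linear_diff[OF bounded_linear.linear[OF L]] algebra_simps)
qed

theorem lemma1:
  fixes Mr gr :: "real^'r^'r" and Mq gq :: "real^'q^'q" and Gr :: "real^'r^'q"
    and N :: nat and r_in s_in :: "real^'r" and qin :: "nat \<Rightarrow> real^'q"
    and r r' r'' :: "real \<Rightarrow> real^'r" and Q :: "nat \<Rightarrow> real \<Rightarrow> real^'q"
  assumes "N \<ge> 1"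
    and "sym_pos_def Mr" and "sym_pos_def Mq"
    and "\<exists>c>0. gr = c *\<^sub>R mat 1" and "\<exists>c>0. gq = c *\<^sub>R mat 1"
    and "\<forall>t\<ge>0. (r has_vector_derivative r' t) (at t within {0..})
              \<and> (r' has_vector_derivative r'' t) (at t within {0..})"
    and "\<forall>t\<ge>0. (Mr + (\<Sum>i<N. transpose Gr ** Mq ** Gr)) *v r'' t
               = - (gr *v r t) + (\<Sum>i<N. transpose Gr *v (gq *v Q i t))"
    and "\<forall>j<N. \<forall>t\<ge>0. (Q j has_vector_derivative - (Gr *v r' t)) (at t within {0..})"
    and "r 0 = r_in" and "r' 0 = s_in" and "\<forall>j<N. Q j 0 = qin j"
  shows "lpk_solution Mr Mq Gr gr gq (real N) r_in s_in (empirical N qin) r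
           (\<lambda>t. empirical N (\<lambda>j. Q j t))"
proof -
  note N = \<open>N \<ge> 1\<close> and deriv_r = assms(6) and particles = assms(8) and initial = assms(9-11)
  define flow where "flow t q = q - Gr *v (r t - r_in)" for t q
  have flow_measurable: "flow t \<in> borel_measurable borel" for t
    unfolding flow_def by measurable
  have "Q j t = flow t (qin j)" if "j < N" "t \<ge> 0" for j t
    using has_vector_derivative_neg_linear_image_imp_eq[OF matrix_vector_mul_bounded_linear,
        of r r' "Q j" Gr t] deriv_r particles initial that
    by (simp add: flow_def)
  then have transport: "empirical N (\<lambda>j. Q j t) = distr (empirical N qin) borel (flow t)"
    if "t \<ge> 0" for t
    using distr_empirical[OF flow_measurable, of N "\<lambda>j. Q j t" t qin] that by simp
  have flow_deriv: "((\<lambda>s. flow s q) has_vector_derivative - (Gr *v r' t)) (at t within {0..})"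
    if "t \<ge> 0" for q t
    using deriv_r that unfolding flow_def
    by (auto intro!: derivative_eq_intros bounded_linear.has_vector_derivative[OF
          matrix_vector_mul_bounded_linear])
  have linear_coupling: "linear (\<lambda>x. transpose Gr *v (gq *v x))"
    by (intro linear_compose[of "(*v) gq" "(*v) (transpose Gr)", unfolded comp_def]
        matrix_vector_mul_linear)
  have moments:
    "(Mr + real N *\<^sub>R integral\<^sup>L (empirical N (\<lambda>j. Q j t)) (\<lambda>q. transpose Gr ** Mq ** Gr)) *v r'' t
     = - (gr *v r t) + real N *\<^sub>R (transpose Gr *v (gq *v integral\<^sup>L (empirical N (\<lambda>j. Q j t)) (\<lambda>q. q)))"
    if "t \<ge> 0" for t
    using assms(7) that
      sum_const_eq_mass_times_integral_empirical[OF N, of "transpose Gr ** Mq ** Gr" "\<lambda>j. Q j t"]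
      sum_linear_eq_mass_times_mean_empirical[OF N linear_coupling, of "\<lambda>j. Q j t"]
    by simp
  show ?thesis
    unfolding lpk_solution_def
    using P1_empirical[OF N] deriv_r initial moments flow_deriv transport flow_measurable
    by (intro conjI exI[of _ r'] exI[of _ r''] exI[of _ flow]) (auto simp: flow_def)
qed

end
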